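(* Let $\mathcal{C}$ be an $(n,k,d)$ linear MDS code over a finite field $\mathbb{F}_q$ with $d \ge 2$. Then $$\frac{1}{d-1}\binom{n}{d-2} \le \rho(\mathcal{C}) \le \binom{n}{d-2}.$$
   Context: An $(n,k,d)$ linear MDS code is a linear code over $\mathbb{F}_q$ of length $n$, dimension $k$ and minimum Hamming distance $d = n-k+1$. A parity-check matrix for $\mathcal{C}$ is any matrix (possibly with linearly dependent rows) whose rows span $\mathcal{C}^\perp$. For a parity-check matrix $H$, the stopping distance $s(H)$ is the largest integer such that for every set of $s(H)-1$ or fewer columns of $H$, the projection of $H$ onto those columns contains at least one row with exactly one nonzero entry. The stopping redundancy $\rho(\mathcal{C})$ is the smallest number of rows of a parity-check matrix $H$ for $\mathcal{C}$ with $s(H) = d$. *)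

theory Defs
  imports "HOL-Analysis.Analysis"
begin

text \<open>Codewords of length n over a field are vectors of type 'a^'n, n = CARD('n).
  A parity-check matrix is a list of rows (repetitions / dependent rows allowed).\<close>

definition hamming_weight :: "('a::zero)^'n \<Rightarrow> nat" where
  "hamming_weight x = card {i. x $ i \<noteq> 0}"

definition min_distance :: "(('a::field)^'n) set \<Rightarrow> nat" where
  "min_distance C = Inf {hamming_weight c | c. c \<in> C \<and> c \<noteq> 0}"

definition dual_code :: "(('a::field)^'n) set \<Rightarrow> ('a^'n) set" where
  "dual_code C = {x. \<forall>c\<in>C. (\<Sum>i\<in>UNIV. x $ i * c $ i) = 0}"

definition is_parity_check_matrix :: "(('a::field)^'n) set \<Rightarrow> ('a^'n) list \<Rightarrow> bool" where
  "is_parity_check_matrix C H \<longleftrightarrow> vec.span (set H) = dual_code C"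

definition stopping_distance :: "(('a::field)^'n) list \<Rightarrow> nat" where
  "stopping_distance H = (GREATEST s. \<forall>S::'n set. S \<noteq> {} \<and> card S \<le> s - 1 \<longrightarrow>
       (\<exists>h\<in>set H. card {i\<in>S. h $ i \<noteq> 0} = 1))"

definition stopping_redundancy :: "(('a::field)^'n) set \<Rightarrow> nat" where
  "stopping_redundancy C = (LEAST r. \<exists>H. length H = r \<and> is_parity_check_matrix C H
       \<and> stopping_distance H = min_distance C)"

definition is_linear_MDS_code :: "(('a::field)^'n) set \<Rightarrow> nat \<Rightarrow> nat \<Rightarrow> nat \<Rightarrow> bool" where
  "is_linear_MDS_code C n k d \<longleftrightarrow> vec.subspace C \<and> n = CARD('n) \<and> k = vec.dim C
     \<and> d = min_distance C \<and> d = n - k + 1"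

end

theory Submission
  imports Defs
begin

text \<open>Since any \<open>k\<close> coordinates of an MDS code are an information set,
  every nonzero dual codeword has at most \<open>d - 2\<close> zeros, and every \<open>(d - 2)\<close>-set \<open>T\<close> of
  coordinates is the zero set of some dual codeword \<open>h\<^sub>T\<close>. The rows \<open>h\<^sub>T\<close> span the dual code
  (subtracting a multiple of a suitable \<open>h\<^sub>T\<close> lowers the weight of a dual codeword), and they
  have stopping distance \<open>d\<close>: a set \<open>S\<close> of at most \<open>d - 1\<close> columns containing \<open>j\<close> is resolved
  by \<open>h\<^sub>T\<close> for any \<open>T \<supseteq> S - {j}\<close> avoiding \<open>j\<close>.
  Conversely, a dual codeword resolves a \<open>(d - 1)\<close>-set \<open>S\<close> only if \<open>S\<close> is its zero set plus one
  coordinate, so each row resolves at most \<open>k + 1\<close> of the \<open>(d - 1)\<close>-sets; as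
  \<open>(k + 1) (n choose (d - 2)) = (d - 1) (n choose (d - 1))\<close>, this gives the lower bound.\<close>

definition zero_set :: "('a::zero)^'n \<Rightarrow> 'n set" where
  "zero_set x = {i. x $ i = 0}"

definition restrict_coords :: "'n set \<Rightarrow> ('a::zero)^'n \<Rightarrow> 'a^'n" where
  "restrict_coords U x = (\<chi> i. if i \<in> U then x $ i else 0)"

definition supported_on :: "'n set \<Rightarrow> (('a::zero)^'n) set" where
  "supported_on U = {x. \<forall>i. i \<notin> U \<longrightarrow> x $ i = 0}"

lemma hamming_weight_eq_card_Compl_zero_set: "hamming_weight x = card (- zero_set x)"
  unfolding hamming_weight_def zero_set_def by (simp add: Collect_neg_eq)

lemma card_Compl: "card (- A :: 'n::finite set) = CARD('n) - card A"
  by (simp add: Compl_eq_Diff_UNIV card_Diff_subset)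

lemma linear_restrict_coords: "Vector_Spaces.linear (*s) (*s) (restrict_coords U :: ('a::field)^'n \<Rightarrow> _)"
  unfolding Vector_Spaces.linear_iff
  by (auto simp: restrict_coords_def vec_eq_iff vec.vector_space_axioms)

lemma restrict_coords_in_supported_on: "restrict_coords U x \<in> supported_on U"
  by (simp add: restrict_coords_def supported_on_def)

lemma subspace_supported_on: "vec.subspace (supported_on U :: (('a::field)^'n) set)"
  unfolding vec.subspace_def supported_on_def by auto

lemma dim_supported_on_le: "vec.dim (supported_on U :: (('a::field)^'n) set) \<le> card U"
proof -
  have "supported_on U \<subseteq> vec.span ((\<lambda>i. axis i (1::'a)) ` U)"
  proof
    fix x :: "'a^'n" assume x: "x \<in> supported_on U"
    have "x = (\<Sum>i\<in>U. x $ i *s axis i 1)"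
      using x by (auto simp: vec_eq_iff sum_component axis_def supported_on_def
          if_distrib[of "\<lambda>t. _ * t"] cong: if_cong)
    also have "\<dots> \<in> vec.span ((\<lambda>i. axis i (1::'a)) ` U)"
      by (intro vec.span_sum vec.span_scale vec.span_base) auto
    finally show "x \<in> vec.span ((\<lambda>i. axis i (1::'a)) ` U)" .
  qed
  then have "vec.dim (supported_on U :: (('a::field)^'n) set) \<le> card ((\<lambda>i. axis i (1::'a)) ` U)"
    by (intro vec.dim_le_card) auto
  also have "\<dots> \<le> card U" by (rule card_image_le) auto
  finally show ?thesis .
qed

lemma subspace_dual_code: "vec.subspace (dual_code C :: (('a::field)^'n) set)"
proof -
  have "(\<Sum>i\<in>UNIV. c * x $ i * y $ i) = c * (\<Sum>i\<in>UNIV. x $ i * y $ i)" for c :: 'a and x y :: "'a^'n"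
    by (simp add: sum_distrib_left mult.assoc)
  then show ?thesis unfolding vec.subspace_def dual_code_def
    by (auto simp: distrib_right sum.distrib)
qed

lemma min_distance_le_hamming_weight:
  assumes "c \<in> C" "c \<noteq> 0" shows "min_distance C \<le> hamming_weight c"
  unfolding min_distance_def using assms by (intro cInf_lower) (auto intro: bdd_belowI[of _ 0])

lemma min_distance_attained:
  assumes "c \<in> C" "c \<noteq> 0" shows "\<exists>c\<in>C. c \<noteq> 0 \<and> hamming_weight c = min_distance C"
proof -
  have "{hamming_weight c | c. c \<in> C \<and> c \<noteq> 0} \<noteq> {}" using assms by auto
  from Inf_nat_def1[OF this] show ?thesis unfolding min_distance_def by auto
qed

lemma min_distance_trivial_code:
  assumes "C \<subseteq> {0}" shows "min_distance C = Inf {}"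
proof -
  have no_weights: "{hamming_weight c | c. c \<in> C \<and> c \<noteq> 0} = {}" using assms by auto
  show ?thesis unfolding min_distance_def no_weights ..
qed

lemma inj_on_restrict_coords:
  assumes "vec.subspace C" "card (- U) < min_distance C"
  shows "inj_on (restrict_coords U) C"
proof
  fix x y assume xy: "x \<in> C" "y \<in> C" "restrict_coords U x = restrict_coords U y"
  have "- zero_set (x - y) \<subseteq> - U"
    using xy(3) by (auto simp: restrict_coords_def vec_eq_iff zero_set_def) metis
  then have "hamming_weight (x - y) \<le> card (- U)"
    unfolding hamming_weight_eq_card_Compl_zero_set by (simp add: card_mono)
  then have "hamming_weight (x - y) < min_distance C" using assms(2) by linarith
  moreover have "x - y \<in> C" using xy assms(1) by (simp add: vec.subspace_diff)
  ultimately show "x = y" using min_distance_le_hamming_weight by fastforce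
qed

section \<open>Stopping sets\<close>

text \<open>A stopping set of \<open>H\<close> is a nonempty set of columns on which no row has exactly one
  nonzero entry.\<close>
definition no_stopping_set_below :: "(('a::field)^'n) list \<Rightarrow> nat \<Rightarrow> bool" where
  "no_stopping_set_below H s \<longleftrightarrow> (\<forall>S::'n set. S \<noteq> {} \<and> card S \<le> s - 1 \<longrightarrow>
       (\<exists>h\<in>set H. card {i\<in>S. h $ i \<noteq> 0} = 1))"

lemma stopping_distance_eq_Greatest: "stopping_distance H = (GREATEST s. no_stopping_set_below H s)"
  unfolding stopping_distance_def no_stopping_set_below_def ..

lemma no_stopping_set_below_mono:
  "no_stopping_set_below H s \<Longrightarrow> t \<le> s \<Longrightarrow> no_stopping_set_below H t"
  unfolding no_stopping_set_below_def by (meson diff_le_mono le_trans)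

lemma no_stopping_set_below_stopping_distance: "no_stopping_set_below H (stopping_distance H)"
proof (cases "\<exists>b. \<forall>s. no_stopping_set_below H s \<longrightarrow> s \<le> b")
  case True
  then obtain b where "\<And>s. no_stopping_set_below H s \<Longrightarrow> s \<le> b" by blast
  moreover have "no_stopping_set_below H 0" by (simp add: no_stopping_set_below_def)
  ultimately show ?thesis unfolding stopping_distance_eq_Greatest by (rule GreatestI_nat[rotated])
next
  case False
  then show ?thesis by (meson nat_le_linear no_stopping_set_below_mono)
qed

lemma stopping_distance_eqI:
  assumes "no_stopping_set_below H s" "\<not> no_stopping_set_below H (Suc s)"
  shows "stopping_distance H = s"
  unfolding stopping_distance_eq_Greatest
proof (rule Greatest_equality)
  fix t assume "no_stopping_set_below H t"
  then show "t \<le> s" using assms(2) no_stopping_set_below_mono[of H t "Suc s"] by linarith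
qed (rule assms(1))

text \<open>If no bound exists, both \<open>GREATEST\<close> and \<open>Inf {}\<close> are the unspecified \<open>THE x. False\<close>.\<close>
lemma stopping_distance_unbounded:
  assumes "\<And>s. no_stopping_set_below H s" shows "stopping_distance H = Inf {}"
proof -
  have "\<not> (\<forall>t. no_stopping_set_below H t \<longrightarrow> t \<le> s)" for s
    using assms[of "Suc s"] by auto
  then have "(\<lambda>s. no_stopping_set_below H s \<and> (\<forall>t. no_stopping_set_below H t \<longrightarrow> t \<le> s))
      = (\<lambda>s. False)"
    by (intro ext) blast
  then show ?thesis
    unfolding stopping_distance_eq_Greatest Greatest_def Inf_nat_def Least_def by simp
qed

lemma no_stopping_set_below_beyond_length:
  fixes H :: "(('a::field)^'n) list"
  assumes "no_stopping_set_below H s" "CARD('n) < s" shows "no_stopping_set_below H t"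
  unfolding no_stopping_set_below_def
proof (intro allI impI)
  fix S :: "'n set" assume "S \<noteq> {} \<and> card S \<le> t - 1"
  moreover have "card S \<le> s - 1" using card_mono[OF finite subset_UNIV, of S] assms(2) by simp
  ultimately show "\<exists>h\<in>set H. card {i\<in>S. h $ i \<noteq> 0} = 1"
    using assms(1) unfolding no_stopping_set_below_def by blast
qed

text \<open>A row orthogonal to \<open>c\<close> cannot meet the support of \<open>c\<close> in exactly one position.\<close>
lemma support_is_stopping_set:
  assumes "set H \<subseteq> dual_code C" "c \<in> C" "c \<noteq> 0"
  shows "\<not> no_stopping_set_below H (Suc (hamming_weight c))"
proof
  define S where "S = {i. c $ i \<noteq> 0}"
  assume "no_stopping_set_below H (Suc (hamming_weight c))"
  moreover have "S \<noteq> {}" using assms(3) by (auto simp: S_def vec_eq_iff)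
  moreover have "card S \<le> Suc (hamming_weight c) - 1" by (simp add: S_def hamming_weight_def)
  ultimately obtain h where h: "h \<in> set H" "card {i\<in>S. h $ i \<noteq> 0} = 1"
    unfolding no_stopping_set_below_def by blast
  then obtain j where j: "{i\<in>S. h $ i \<noteq> 0} = {j}" by (auto simp: card_1_singleton_iff)
  have "0 = (\<Sum>i\<in>UNIV. h $ i * c $ i)" using h(1) assms(1,2) unfolding dual_code_def by auto
  also have "\<dots> = (\<Sum>i\<in>{j}. h $ i * c $ i)"
    using j by (intro sum.mono_neutral_right) (auto simp: S_def)
  also have "\<dots> \<noteq> 0" using j by (auto simp: S_def)
  finally show False by simp
qed

lemma card_sets_resolved_by_row:
  fixes h :: "('a::field)^'n"
  assumes "h \<noteq> 0 \<Longrightarrow> card (zero_set h) \<le> m"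
  shows "card {S. card S = Suc m \<and> card {i\<in>S. h $ i \<noteq> 0} = 1} \<le> CARD('n) - m"
    (is "card ?F \<le> _")
proof (cases "?F = {}")
  case False
  have resolved: "\<exists>j. j \<notin> zero_set h \<and> S = insert j (zero_set h)" "card (zero_set h) = m"
    if "S \<in> ?F" for S
  proof -
    have "card {i\<in>S. h $ i \<noteq> 0} = 1" using that by simp
    then obtain j where j: "{i\<in>S. h $ i \<noteq> 0} = {j}" by (auto simp: card_1_singleton_iff)
    then have "h \<noteq> 0" "j \<in> S" "j \<notin> zero_set h" "S - {j} \<subseteq> zero_set h"
      by (auto simp: zero_set_def)
    moreover have "card (S - {j}) = m" using that \<open>j \<in> S\<close> by simp
    ultimately have "S - {j} = zero_set h" using assms by (intro card_seteq) auto
    with \<open>j \<in> S\<close> \<open>j \<notin> zero_set h\<close> \<open>card (S - {j}) = m\<close>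
    show "\<exists>j. j \<notin> zero_set h \<and> S = insert j (zero_set h)" "card (zero_set h) = m" by auto
  qed
  have "?F \<subseteq> (\<lambda>j. insert j (zero_set h)) ` (- zero_set h)" using resolved(1) by blast
  then have "card ?F \<le> card (- zero_set h)" by (meson card_image_le finite surj_card_le)
  also have "\<dots> = CARD('n) - m" using resolved(2) False by (auto simp: card_Compl)
  finally show ?thesis .
qed (metis card.empty zero_le)

lemma choose_Suc_le_length_mult:
  fixes H :: "(('a::field)^'n) list"
  assumes "no_stopping_set_below H (Suc (Suc m))"
    and "\<And>h. h \<in> set H \<Longrightarrow> h \<noteq> 0 \<Longrightarrow> card (zero_set h) \<le> m"
  shows "CARD('n) choose Suc m \<le> length H * (CARD('n) - m)"
proof -
  define F where "F h = {S::'n set. card S = Suc m \<and> card {i\<in>S. h $ i \<noteq> 0} = 1}" for h :: "'a^'n"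
  have "{S::'n set. card S = Suc m} \<subseteq> (\<Union>h\<in>set H. F h)"
  proof
    fix S :: "'n set" assume "S \<in> {S. card S = Suc m}"
    then have "card S = Suc m" "S \<noteq> {} \<and> card S \<le> Suc (Suc m) - 1" by auto
    then obtain h where "h \<in> set H" "card {i\<in>S. h $ i \<noteq> 0} = 1"
      using assms(1) unfolding no_stopping_set_below_def by blast
    with \<open>card S = Suc m\<close> show "S \<in> (\<Union>h\<in>set H. F h)" unfolding F_def by blast
  qed
  then have "card {S::'n set. card S = Suc m} \<le> card (\<Union>h\<in>set H. F h)"
    by (intro card_mono) simp_all
  then have "CARD('n) choose Suc m \<le> card (\<Union>h\<in>set H. F h)"
    using n_subsets[of "UNIV :: 'n set" "Suc m"] by simp
  also have "\<dots> \<le> (\<Sum>h\<in>set H. card (F h))" by (rule card_UN_le) simp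
  also have "\<dots> \<le> (\<Sum>h\<in>set H. CARD('n) - m)"
    unfolding F_def using assms(2) by (intro sum_mono card_sets_resolved_by_row) auto
  also have "\<dots> \<le> length H * (CARD('n) - m)" by (simp add: card_length)
  finally show ?thesis .
qed

lemma choose_le_length_mult:
  fixes H :: "(('a::field)^'n) list"
  assumes "no_stopping_set_below H (Suc (Suc m))"
    and "\<And>h. h \<in> set H \<Longrightarrow> h \<noteq> 0 \<Longrightarrow> card (zero_set h) \<le> m"
    and "m < CARD('n)"
  shows "CARD('n) choose m \<le> length H * Suc m"
proof -
  have "(CARD('n) - m) * (CARD('n) choose m) = Suc m * (CARD('n) choose Suc m)"
    by (simp only: binomial_absorb_comp binomial_absorption)
  also have "\<dots> \<le> Suc m * (length H * (CARD('n) - m))"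
    using choose_Suc_le_length_mult[OF assms(1,2)] by (rule mult_le_mono2)
  also have "\<dots> = (CARD('n) - m) * (length H * Suc m)" by (simp only: ac_simps)
  finally show ?thesis using assms(3) by simp
qed

lemma no_stopping_set_below_if_zero_sets_attained:
  fixes H :: "(('a::field)^'n) list"
  assumes "\<And>T. card T = m \<Longrightarrow> \<exists>h\<in>set H. zero_set h = T" "m < CARD('n)"
  shows "no_stopping_set_below H (Suc (Suc m))"
  unfolding no_stopping_set_below_def
proof (intro allI impI)
  fix S :: "'n set" assume S: "S \<noteq> {} \<and> card S \<le> Suc (Suc m) - 1"
  then obtain j where "j \<in> S" by blast
  have "card (S - {j}) \<le> m" "m \<le> card (- {j})"
    using S \<open>j \<in> S\<close> assms(2) by (auto simp: card_Compl)
  then obtain T where T: "S - {j} \<subseteq> T" "T \<subseteq> - {j}" "card T = m"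
    using exists_subset_between[of "S - {j}" m "- {j}"] by auto
  then obtain h where "h \<in> set H" "zero_set h = T" using assms(1) by blast
  moreover have "{i\<in>S. h $ i \<noteq> 0} = {j}"
    using \<open>zero_set h = T\<close> T \<open>j \<in> S\<close> by (auto simp: zero_set_def)
  ultimately show "\<exists>h\<in>set H. card {i\<in>S. h $ i \<noteq> 0} = 1" by (intro bexI) simp_all
qed

text \<open>Strong induction on the weight: if \<open>x \<noteq> 0\<close> and \<open>x $ j \<noteq> 0\<close>, pick \<open>h\<close> whose zero set
  contains that of \<open>x\<close> but not \<open>j\<close>; then \<open>x - (x $ j / h $ j) *s h\<close> has smaller support.\<close>
lemma span_eq_if_zero_sets_attained:
  fixes V G :: "(('a::field)^'n) set"
  assumes V: "vec.subspace V" "\<And>x. x \<in> V \<Longrightarrow> x \<noteq> 0 \<Longrightarrow> card (zero_set x) \<le> m"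
    and G: "G \<subseteq> V" "\<And>T. card T = m \<Longrightarrow> \<exists>h\<in>G. zero_set h = T"
    and m: "m < CARD('n)"
  shows "vec.span G = V"
proof
  show "vec.span G \<subseteq> V" using G(1) V(1) by (rule vec.span_minimal)
  have "x \<in> vec.span G" if "x \<in> V" "hamming_weight x = w" for x w
    using that
  proof (induction w arbitrary: x rule: less_induct)
    case (less w x)
    show ?case
    proof (cases "x = 0")
      case False
      then obtain j where j: "x $ j \<noteq> 0" by (auto simp: vec_eq_iff)
      have "card (zero_set x) \<le> m" "m \<le> card (- {j})"
        using V(2) less.prems(1) False m by (auto simp: card_Compl)
      moreover have "zero_set x \<subseteq> - {j}" using j by (auto simp: zero_set_def)
      ultimately obtain T where T: "zero_set x \<subseteq> T" "T \<subseteq> - {j}" "card T = m"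
        using exists_subset_between[OF _ _ _ finite] by blast
      then obtain h where h: "h \<in> G" "zero_set h = T" using G(2) by blast
      have hj: "h $ j \<noteq> 0" using h(2) T(2) by (auto simp: zero_set_def)
      define y where "y = x - (x $ j / h $ j) *s h"
      have "y \<in> V" unfolding y_def
        using less.prems(1) h(1) G(1) V(1) by (intro vec.subspace_diff vec.subspace_scale) auto
      have "- zero_set y \<subset> - zero_set x"
        using T h(2) hj j by (auto simp: zero_set_def y_def)
      then have "card (- zero_set y) < card (- zero_set x)" by (rule psubset_card_mono[OF finite])
      then have "hamming_weight y < w"
        using less.prems(2) by (simp add: hamming_weight_eq_card_Compl_zero_set)
      then have "y \<in> vec.span G" using less.IH \<open>y \<in> V\<close> by blast
      then have "y + (x $ j / h $ j) *s h \<in> vec.span G"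
        by (rule vec.span_add) (simp add: vec.span_scale vec.span_base h(1))
      then show ?thesis by (simp add: y_def)
    qed (simp add: vec.span_zero)
  qed
  then show "V \<subseteq> vec.span G" by blast
qed

section \<open>MDS codes\<close>

locale MDS_code =
  fixes C :: "(('a::field)^'n) set" and n k d :: nat
  assumes MDS: "is_linear_MDS_code C n k d" and two_le_d: "2 \<le> d"
begin

lemma subspace: "vec.subspace C" and n_eq: "n = CARD('n)" and k_eq: "k = vec.dim C"
  and d_eq: "d = min_distance C" and d_eq_n_minus_k: "d = n - k + 1"
  using MDS unfolding is_linear_MDS_code_def by auto

lemma k_less_n: "k < n"
proof -
  have "k \<le> n" using vec.dim_subset_UNIV[of C] k_eq n_eq
    by (simp add: vec.dimension_def card_cart_basis)
  then show ?thesis using d_eq_n_minus_k two_le_d by linarith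
qed

lemma d_minus_2_less_n: "d - 2 < n" and Suc_Suc_d_minus_2: "Suc (Suc (d - 2)) = d"
  using k_less_n d_eq_n_minus_k two_le_d by auto

lemma inj_on_restrict_coords_card_k:
  assumes "card U = k" shows "inj_on (restrict_coords U) C"
  using assms subspace d_eq d_eq_n_minus_k n_eq by (intro inj_on_restrict_coords) (auto simp: card_Compl)

lemma restrict_coords_image:
  assumes "card U = k" shows "restrict_coords U ` C = supported_on U"
proof -
  note inj = inj_on_restrict_coords_card_k[OF assms]
  show ?thesis
  proof (rule vec.subspace_dim_equal)
    show "vec.subspace (restrict_coords U ` C)"
      by (rule vec.linear_subspace_image[OF linear_restrict_coords subspace])
    show "vec.subspace (supported_on U)" by (rule subspace_supported_on)
    show "restrict_coords U ` C \<subseteq> supported_on U" by (auto intro: restrict_coords_in_supported_on)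
    have "vec.dim (restrict_coords U ` C) = vec.dim C"
      using inj subspace by (intro vec.dim_image_eq[OF linear_restrict_coords]) (metis vec.span_eq_iff)
    then show "vec.dim (supported_on U) \<le> vec.dim (restrict_coords U ` C)"
      using dim_supported_on_le[of U] assms k_eq by simp
  qed
qed

lemma codeword_with_restriction:
  assumes "card U = k" "x \<in> supported_on U" obtains c where "c \<in> C" "restrict_coords U c = x"
  using restrict_coords_image[OF assms(1)] assms(2) by force

lemma card_zero_set_dual_le:
  assumes x: "x \<in> dual_code C" "x \<noteq> 0" shows "card (zero_set x) \<le> d - 2"
proof (rule ccontr)
  assume "\<not> ?thesis"
  then have "d - 1 \<le> card (zero_set x)" by linarith
  then obtain Z where Z: "Z \<subseteq> zero_set x" "card Z = d - 1" by (rule obtain_subset_with_card_n)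
  have card_U: "card (- Z) = k" using Z(2) n_eq d_eq_n_minus_k k_less_n by (simp add: card_Compl)
  obtain j where j: "x $ j \<noteq> 0" using x(2) by (auto simp: vec_eq_iff)
  then have "axis j 1 \<in> supported_on (- Z)" using Z(1) by (auto simp: supported_on_def axis_def zero_set_def)
  then obtain c where c: "c \<in> C" "restrict_coords (- Z) c = axis j 1"
    using codeword_with_restriction[OF card_U] by blast
  have "0 = (\<Sum>i\<in>UNIV. x $ i * c $ i)" using x(1) c(1) unfolding dual_code_def by auto
  also have "\<dots> = (\<Sum>i\<in>UNIV. x $ i * restrict_coords (- Z) c $ i)"
    using Z(1) by (intro sum.cong) (auto simp: restrict_coords_def zero_set_def)
  also have "\<dots> = x $ j" using c(2) by (simp add: axis_def if_distrib[of "\<lambda>t. _ * t"] cong: if_cong)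
  finally show False using j by simp
qed

text \<open>With \<open>g i\<close> the rows of a generator matrix in systematic form on the information set \<open>U\<close>,
  the vector \<open>e\<^sub>u - \<Sum>\<^sub>i\<^sub>\<in>\<^sub>U (g i $ u) e\<^sub>i\<close> is a parity check for every \<open>u \<notin> U\<close>.\<close>
lemma dual_codeword_vanishing_on:
  assumes T: "card T = d - 2" shows "\<exists>x\<in>dual_code C. x \<noteq> 0 \<and> T \<subseteq> zero_set x"
proof -
  have card_T: "card (- T) = Suc k" using T n_eq d_eq_n_minus_k k_less_n by (simp add: card_Compl)
  then obtain u where "u \<in> - T" by (metis card.empty ex_in_conv nat.distinct(1))
  define U where "U = - T - {u}"
  have card_U: "card U = k" using card_T \<open>u \<in> - T\<close> by (simp add: U_def)
  have "\<exists>c\<in>C. restrict_coords U c = axis i 1" if "i \<in> U" for i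
  proof -
    have "axis i 1 \<in> supported_on U" using that by (auto simp: supported_on_def axis_def)
    then show ?thesis using codeword_with_restriction[OF card_U] by metis
  qed
  then obtain g where g: "\<And>i. i \<in> U \<Longrightarrow> g i \<in> C \<and> restrict_coords U (g i) = axis i 1" by metis
  have g_U: "g i $ j = (if i = j then 1 else 0)" if "i \<in> U" "j \<in> U" for i j
  proof -
    have "g i $ j = restrict_coords U (g i) $ j" using that(2) by (simp add: restrict_coords_def)
    then show ?thesis using g[OF that(1)] by (simp add: axis_def)
  qed
  have expansion: "c = (\<Sum>i\<in>U. c $ i *s g i)" if c: "c \<in> C" for c
  proof -
    have "(\<Sum>i\<in>U. c $ i *s g i) \<in> C" using subspace g by (intro vec.subspace_sum vec.subspace_scale) auto
    moreover have "restrict_coords U (\<Sum>i\<in>U. c $ i *s g i) = restrict_coords U c"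
      using g_U by (auto simp: restrict_coords_def vec_eq_iff sum_component if_distrib[of "\<lambda>t. _ * t"]
          cong: if_cong)
    ultimately show ?thesis using inj_onD[OF inj_on_restrict_coords_card_k[OF card_U]] c by metis
  qed
  define x :: "'a^'n" where "x = (\<chi> j. if j = u then 1 else if j \<in> U then - (g j $ u) else 0)"
  have "x \<in> dual_code C"
    unfolding dual_code_def
  proof (intro CollectI ballI)
    fix c assume c: "c \<in> C"
    have "(\<Sum>i\<in>UNIV. x $ i * c $ i) = (\<Sum>i\<in>insert u U. x $ i * c $ i)"
      by (intro sum.mono_neutral_right) (auto simp: x_def)
    also have "\<dots> = c $ u - (\<Sum>i\<in>U. c $ i * g i $ u)"
      by (subst sum.insert) (auto simp: U_def x_def sum_negf mult.commute intro!: sum.cong)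
    also have "\<dots> = 0" using arg_cong[of _ _ "\<lambda>v. v $ u", OF expansion[OF c]] by (simp add: sum_component)
    finally show "(\<Sum>i\<in>UNIV. x $ i * c $ i) = 0" .
  qed
  moreover have "x \<noteq> 0" "T \<subseteq> zero_set x"
    using \<open>u \<in> - T\<close> by (auto simp: U_def x_def vec_eq_iff zero_set_def)
  ultimately show ?thesis by blast
qed

lemma dual_codeword_with_zero_set:
  assumes "card T = d - 2" shows "\<exists>x\<in>dual_code C. zero_set x = T"
proof -
  obtain x where x: "x \<in> dual_code C" "x \<noteq> 0" "T \<subseteq> zero_set x"
    using dual_codeword_vanishing_on[OF assms] by blast
  then have "card (zero_set x) \<le> card T" using card_zero_set_dual_le assms by simp
  with x show ?thesis using card_seteq[OF finite] by blast
qed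

lemma stopping_distance_eq_d:
  assumes "set H \<subseteq> dual_code C" "no_stopping_set_below H d"
  shows "stopping_distance H = d"
proof (cases "C \<subseteq> {0}")
  case True
  \<comment> \<open>then \<open>d = n + 1\<close> and both sides are the unspecified value \<open>Inf {}\<close>\<close>
  then have "k = 0" unfolding k_eq by (simp only: vec.dim_eq_0)
  then have "no_stopping_set_below H s" for s
    using assms(2) n_eq d_eq_n_minus_k by (auto intro: no_stopping_set_below_beyond_length[of H d])
  then have "stopping_distance H = Inf {}" by (rule stopping_distance_unbounded)
  also have "\<dots> = d" unfolding d_eq using True by (rule min_distance_trivial_code[symmetric])
  finally show ?thesis .
next
  case False
  then obtain c where c: "c \<in> C" "c \<noteq> 0" "hamming_weight c = min_distance C"
    using min_distance_attained by blast
  have "\<not> no_stopping_set_below H (Suc d)"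
    using support_is_stopping_set[OF assms(1) c(1,2)] c(3) d_eq by simp
  with assms(2) show ?thesis by (rule stopping_distance_eqI)
qed

lemma parity_check_matrix_of_minimum_weight_dual_codewords:
  "\<exists>H. length H = n choose (d - 2) \<and> is_parity_check_matrix C H \<and> stopping_distance H = d"
proof -
  obtain h where h: "\<And>T. card T = d - 2 \<Longrightarrow> h T \<in> dual_code C \<and> zero_set (h T) = T"
    using dual_codeword_with_zero_set by metis
  obtain L where L: "set L = {T::'n set. card T = d - 2}" "distinct L"
    using finite_distinct_list[of "{T::'n set. card T = d - 2}"] by auto
  define H where "H = map h L"
  have zero_sets: "\<exists>x\<in>set H. zero_set x = T" if "card T = d - 2" for T
    using that h L(1) by (auto simp: H_def)
  have H_dual: "set H \<subseteq> dual_code C" using h L(1) by (auto simp: H_def)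
  have "length H = n choose (d - 2)"
    using L n_subsets[of "UNIV :: 'n set"] n_eq by (simp add: H_def distinct_card[symmetric])
  moreover have "is_parity_check_matrix C H"
    unfolding is_parity_check_matrix_def
    using subspace_dual_code card_zero_set_dual_le H_dual zero_sets d_minus_2_less_n n_eq
    by (intro span_eq_if_zero_sets_attained) auto
  moreover have "no_stopping_set_below H (Suc (Suc (d - 2)))"
    using zero_sets d_minus_2_less_n n_eq by (intro no_stopping_set_below_if_zero_sets_attained) auto
  then have "stopping_distance H = d"
    using H_dual stopping_distance_eq_d by (simp add: Suc_Suc_d_minus_2)
  ultimately show ?thesis by blast
qed

lemma length_parity_check_matrix_lower_bound:
  assumes "is_parity_check_matrix C H" "stopping_distance H = d"
  shows "n choose (d - 2) \<le> length H * (d - 1)"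
proof -
  have "set H \<subseteq> dual_code C"
    using assms(1) vec.span_superset unfolding is_parity_check_matrix_def by blast
  moreover have "no_stopping_set_below H (Suc (Suc (d - 2)))"
    using no_stopping_set_below_stopping_distance[of H] assms(2) by (simp add: Suc_Suc_d_minus_2)
  ultimately have "CARD('n) choose (d - 2) \<le> length H * Suc (d - 2)"
    using card_zero_set_dual_le d_minus_2_less_n n_eq by (intro choose_le_length_mult) auto
  then show ?thesis using two_le_d n_eq by (simp add: Suc_diff_Suc numeral_2_eq_2)
qed

end

theorem theorem16:
  fixes C :: "(('a::{finite,field})^'n) set" and n k d :: nat
  assumes "is_linear_MDS_code C n k d" and "d \<ge> 2"
  shows "real (n choose (d - 2)) / real (d - 1) \<le> real (stopping_redundancy C)
    \<and> stopping_redundancy C \<le> n choose (d - 2)"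
proof -
  interpret MDS_code C n k d using assms by unfold_locales
  let ?P = "\<lambda>r. \<exists>H. length H = r \<and> is_parity_check_matrix C H \<and> stopping_distance H = d"
  have P: "?P (n choose (d - 2))" by (rule parity_check_matrix_of_minimum_weight_dual_codewords)
  then have upper: "stopping_redundancy C \<le> n choose (d - 2)"
    unfolding stopping_redundancy_def d_eq by (rule Least_le)
  from P have "?P (stopping_redundancy C)"
    unfolding stopping_redundancy_def d_eq by (rule LeastI)
  then obtain H where "length H = stopping_redundancy C" "is_parity_check_matrix C H"
    "stopping_distance H = d" by blast
  then have "n choose (d - 2) \<le> stopping_redundancy C * (d - 1)"
    using length_parity_check_matrix_lower_bound by metis
  then have "real (n choose (d - 2)) \<le> real (stopping_redundancy C) * real (d - 1)"
    by (metis of_nat_le_iff of_nat_mult)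
  moreover have "real (d - 1) > 0" using assms(2) by simp
  ultimately show ?thesis using upper by (simp add: divide_le_eq)
qed

end
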